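(* Let $G$ be a nice connected graph of order $n$, maximum degree $\Delta$ and chromatic number $k$, and let $W$ be a closed walk of $G$ of length $p$ going through all vertices of $G$. Then ${\rm ML}^{\rm W}(G) \leq p + (n-1)(2k-2)+2\Delta$.
   Context: All graphs are finite and simple. A walk of a graph $G$ is a sequence of vertices $u_0u_1\dots u_p$ with $u_tu_{t+1}\in E(G)$ for all $t$ (vertices and edges may repeat); its length is $p$; it is closed if $u_0=u_p$. For a walk $W$ of $G$, $G+W$ is the multigraph on $V(G)$ whose edge multiset consists of $E(G)$ together with each edge added as many times as $W$ traverses it. A multigraph is locally irregular if no two adjacent vertices have the same degree; a walk is irregularising if $G+W$ is locally irregular. A graph is nice if it is connected and not isomorphic to $K_2$. ${\rm ML}^{\rm W}(G)$ denotes the minimum length of an irregularising walk of $G$ (a walk of length $0$ is allowed). *)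

theory Defs
  imports Main
begin

definition simple_graph :: "'a set \<Rightarrow> ('a \<Rightarrow> 'a \<Rightarrow> bool) \<Rightarrow> bool" where
  "simple_graph V E \<longleftrightarrow> finite V \<and> (\<forall>u v. E u v \<longrightarrow> u \<in> V \<and> v \<in> V)
     \<and> (\<forall>u v. E u v \<longrightarrow> E v u) \<and> (\<forall>v. \<not> E v v)"

definition connected_graph :: "'a set \<Rightarrow> ('a \<Rightarrow> 'a \<Rightarrow> bool) \<Rightarrow> bool" where
  "connected_graph V E \<longleftrightarrow> V \<noteq> {} \<and> (\<forall>u\<in>V. \<forall>v\<in>V. E\<^sup>*\<^sup>* u v)"

definition is_K2 :: "'a set \<Rightarrow> ('a \<Rightarrow> 'a \<Rightarrow> bool) \<Rightarrow> bool" where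
  "is_K2 V E \<longleftrightarrow> (\<exists>a b. a \<noteq> b \<and> V = {a, b} \<and> E a b)"

definition nice :: "'a set \<Rightarrow> ('a \<Rightarrow> 'a \<Rightarrow> bool) \<Rightarrow> bool" where
  "nice V E \<longleftrightarrow> connected_graph V E \<and> \<not> is_K2 V E"

definition degree :: "'a set \<Rightarrow> ('a \<Rightarrow> 'a \<Rightarrow> bool) \<Rightarrow> 'a \<Rightarrow> nat" where
  "degree V E v = card {u \<in> V. E v u}"

definition max_degree :: "'a set \<Rightarrow> ('a \<Rightarrow> 'a \<Rightarrow> bool) \<Rightarrow> nat" where
  "max_degree V E = Max (degree V E ` V)"

definition proper_colouring :: "'a set \<Rightarrow> ('a \<Rightarrow> 'a \<Rightarrow> bool) \<Rightarrow> nat \<Rightarrow> ('a \<Rightarrow> nat) \<Rightarrow> bool" where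
  "proper_colouring V E k c \<longleftrightarrow> (\<forall>v\<in>V. c v < k) \<and> (\<forall>u v. E u v \<longrightarrow> c u \<noteq> c v)"

definition chromatic_number :: "'a set \<Rightarrow> ('a \<Rightarrow> 'a \<Rightarrow> bool) \<Rightarrow> nat" where
  "chromatic_number V E = (LEAST k. \<exists>c. proper_colouring V E k c)"

definition walk :: "'a set \<Rightarrow> ('a \<Rightarrow> 'a \<Rightarrow> bool) \<Rightarrow> 'a list \<Rightarrow> bool" where
  "walk V E W \<longleftrightarrow> W \<noteq> [] \<and> set W \<subseteq> V \<and> (\<forall>i < length W - 1. E (W ! i) (W ! Suc i))"

definition walk_length :: "'a list \<Rightarrow> nat" where
  "walk_length W = length W - 1"

definition closed_walk :: "'a set \<Rightarrow> ('a \<Rightarrow> 'a \<Rightarrow> bool) \<Rightarrow> 'a list \<Rightarrow> bool" where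
  "closed_walk V E W \<longleftrightarrow> walk V E W \<and> hd W = last W"

definition traversals :: "'a list \<Rightarrow> 'a \<Rightarrow> 'a \<Rightarrow> nat" where
  "traversals W u v = card {i. i < length W - 1 \<and> {W ! i, W ! Suc i} = {u, v}}"

text \<open>Degree of v in the multigraph G + W: each edge uv of G has multiplicity
  1 + (number of traversals of uv by W).\<close>
definition degree_plus :: "'a set \<Rightarrow> ('a \<Rightarrow> 'a \<Rightarrow> bool) \<Rightarrow> 'a list \<Rightarrow> 'a \<Rightarrow> nat" where
  "degree_plus V E W v = (\<Sum>u\<in>{u \<in> V. E v u}. 1 + traversals W v u)"

text \<open>G + W is locally irregular (adjacency in G + W is adjacency in G).\<close>
definition irregularising :: "'a set \<Rightarrow> ('a \<Rightarrow> 'a \<Rightarrow> bool) \<Rightarrow> 'a list \<Rightarrow> bool" where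
  "irregularising V E W \<longleftrightarrow> walk V E W \<and>
     (\<forall>u v. E u v \<longrightarrow> degree_plus V E W u \<noteq> degree_plus V E W v)"

definition min_irreg_walk_length :: "'a set \<Rightarrow> ('a \<Rightarrow> 'a \<Rightarrow> bool) \<Rightarrow> nat" where
  "min_irreg_walk_length V E = (LEAST p. \<exists>W. irregularising V E W \<and> walk_length W = p)"

end

(*
  Walking an edge back and forth t times raises the degrees of both its ends in G + W by 2t.
  Fix a proper colouring c with k colours and read W as a closed walk from r. Along W, at the last
  visit of each vertex v other than r, insert fewer than k round trips along the next edge so that
  half the degree of v becomes congruent to c v modulo k; later round trips never touch v again.
  Adjacent vertices other than r then have different degrees, at a cost of at most 2(k - 1)(n - 1).

  The root is separated from its neighbours with at most 2 Delta further steps. If some neighbour w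
  has a degree different from that of r, append w r w r ... of a length L <= deg r + deg w - 2 that
  avoids the at most deg r + deg w - 2 values of L creating a conflict at r or w. If all neighbours
  share the degree F of r, let w1 be the second vertex of W and w another neighbour of r: for even F,
  prepend w1 and append w (r gains 2, w1 and w gain 1); for odd F, drop the initial r and append
  w r w ... w of length 2k - 1 (r gains 2k - 2, w1 loses 1, w gains 2k - 1). Both preserve the
  half-degrees modulo k, and 2k - 2 <= 2 Delta by greedy colouring. The root needs deg r >= 2 here,
  which a rotation of W provides since G is not K2.
*)
theory Submission
  imports Defs
begin

lemma card_Collect_less_Suc:
  "card {i. i < Suc n \<and> P i} = of_bool (P 0) + card {i. i < n \<and> P (Suc i)}"
proof -
  have "{i. i < Suc n \<and> P i} = (if P 0 then {0} else {}) \<union> Suc ` {i. i < n \<and> P (Suc i)}"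
    by (auto simp: less_Suc_eq_0_disj)
  then show ?thesis by (simp add: card_image)
qed

lemma sum_le_mult_card_support:
  fixes m :: "'b \<Rightarrow> nat"
  assumes "finite S" and "\<And>j. m j \<le> b" and "\<And>j. m j \<noteq> 0 \<Longrightarrow> j \<in> S"
  shows "sum m A \<le> b * card S"
proof (cases "finite A")
  case True
  have "sum m A = sum m (A \<inter> S)"
    using True assms(3) by (intro sum.mono_neutral_right) auto
  also have "\<dots> \<le> b * card (A \<inter> S)"
    using sum_bounded_above[of "A \<inter> S" m b] assms(2) by (simp add: mult.commute)
  also have "\<dots> \<le> b * card S"
    using assms(1) by (simp add: card_mono)
  finally show ?thesis .
qed simp

lemma exists_nat_le_not_in:
  fixes B :: "int set"
  assumes "finite B" and "card B \<le> M"
  shows "\<exists>L\<le>M. int L \<notin> B"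
proof (rule ccontr)
  assume "\<not> ?thesis"
  then have "int ` {0..M} \<subseteq> B" by auto
  then have "card (int ` {0..M}) \<le> card B"
    using card_mono[OF assms(1)] by blast
  with assms(2) show False by (simp add: card_image)
qed

definition neighbours :: "'a set \<Rightarrow> ('a \<Rightarrow> 'a \<Rightarrow> bool) \<Rightarrow> 'a \<Rightarrow> 'a set" where
  "neighbours V E v = {u \<in> V. E v u}"

lemma card_neighbours: "card (neighbours V E v) = degree V E v"
  unfolding neighbours_def degree_def ..

lemma walk_iff_successively: "walk V E W \<longleftrightarrow> W \<noteq> [] \<and> set W \<subseteq> V \<and> successively E W"
  unfolding walk_def successively_conv_nth by (auto simp: less_diff_conv)

lemma walk_length_append:
  "W \<noteq> [] \<Longrightarrow> walk_length (W @ W') = walk_length W + length W'"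
  unfolding walk_length_def by (cases W) auto

lemma traversals_singleton [simp]: "traversals [x] a b = 0"
  unfolding traversals_def by simp

lemma traversals_Cons_Cons:
  "traversals (x # y # W) a b = of_bool ({x, y} = {a, b}) + traversals (y # W) a b"
  unfolding traversals_def by (simp add: card_Collect_less_Suc)

text \<open>The degree of v in G + W: each visit of v by W adds 2, except that the two ends of W add only 1.\<close>
definition walk_degree :: "'a set \<Rightarrow> ('a \<Rightarrow> 'a \<Rightarrow> bool) \<Rightarrow> 'a list \<Rightarrow> 'a \<Rightarrow> int" where
  "walk_degree V E W v = int (degree V E v) + 2 * int (count_list W v)
     - of_bool (hd W = v) - of_bool (last W = v)"

fun with_detours :: "'a list \<Rightarrow> (nat \<Rightarrow> nat) \<Rightarrow> 'a list" where
  "with_detours (x # y # W) m = x # concat (replicate (m 0) [y, x]) @ with_detours (y # W) (\<lambda>i. m (Suc i))"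
| "with_detours W m = W"

definition detour_count :: "'a list \<Rightarrow> (nat \<Rightarrow> nat) \<Rightarrow> 'a \<Rightarrow> nat" where
  "detour_count W m v = (\<Sum>i<length W - 1. m i * (of_bool (W ! i = v) + of_bool (W ! Suc i = v)))"

lemma with_detours_eq_Nil_iff [simp]: "with_detours W m = [] \<longleftrightarrow> W = []"
  by (induction W m rule: with_detours.induct) auto

lemma hd_with_detours [simp]: "hd (with_detours W m) = hd W"
  by (induction W m rule: with_detours.induct) auto

lemma last_with_detours [simp]: "last (with_detours W m) = last W"
  by (induction W m rule: with_detours.induct) auto

lemma set_with_detours [simp]: "set (with_detours W m) = set W"
  by (induction W m rule: with_detours.induct) auto

lemma successively_with_detours:
  assumes sym: "\<And>a b. P a b \<Longrightarrow> P b a"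
  shows "successively P W \<Longrightarrow> successively P (with_detours W m)"
proof (induction W m rule: with_detours.induct)
  case (1 x y W m)
  let ?D = "x # concat (replicate (m 0) [y, x])"
  have "P x y" using "1.prems" by simp
  have "successively P (x # concat (replicate n [y, x])) \<and> last (x # concat (replicate n [y, x])) = x"
    for n using \<open>P x y\<close> sym by (induction n) auto
  then have "successively P ?D \<and> last ?D = x" .
  moreover have "successively P (with_detours (y # W) (\<lambda>i. m (Suc i)))"
    using 1 by simp
  moreover have "with_detours (x # y # W) m = ?D @ with_detours (y # W) (\<lambda>i. m (Suc i))"
    by simp
  ultimately show ?case
    using \<open>P x y\<close> by (simp only: successively_append_iff) simp
qed auto

lemma length_with_detours:
  "length (with_detours W m) = length W + 2 * (\<Sum>i<length W - 1. m i)"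
  by (induction W m rule: with_detours.induct)
     (simp_all add: length_concat sum_list_replicate sum.lessThan_Suc_shift del: sum.lessThan_Suc)

lemma count_list_with_detours:
  "count_list (with_detours W m) v = count_list W v + detour_count W m v"
proof (induction W m rule: with_detours.induct)
  case (1 x y W m)
  have Cons: "count_list (a # xs) v = of_bool (a = v) + count_list xs v" for a xs
    by simp
  have "count_list (concat (replicate n [y, x])) v = n * (of_bool (y = v) + of_bool (x = v))" for n
    by (induction n) (auto simp: Cons)
  moreover have "detour_count (x # y # W) m v
      = m 0 * (of_bool (x = v) + of_bool (y = v)) + detour_count (y # W) (\<lambda>i. m (Suc i)) v"
    unfolding detour_count_def by (simp add: sum.lessThan_Suc_shift del: sum.lessThan_Suc)
  ultimately show ?case
    using 1 by (simp add: Cons del: count_list.simps(2))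
qed (simp_all add: detour_count_def)

lemma detour_count_fun_upd:
  assumes "m i = 0" and "i < length W - 1"
  shows "detour_count W (m(i := t)) v
           = detour_count W m v + t * (of_bool (W ! i = v) + of_bool (W ! Suc i = v))"
proof -
  let ?g = "\<lambda>j. of_bool (W ! j = v) + of_bool (W ! Suc j = v) :: nat"
  have "detour_count W (m(i := t)) v = (\<Sum>j<length W - 1. m j * ?g j + (if j = i then t * ?g i else 0))"
    unfolding detour_count_def using assms(1) by (intro sum.cong) auto
  then show ?thesis
    unfolding detour_count_def sum.distrib using assms(2) by simp
qed

lemma walk_degree_with_detours:
  "W \<noteq> [] \<Longrightarrow> walk_degree V E (with_detours W m) v = walk_degree V E W v + 2 * int (detour_count W m v)"
  unfolding walk_degree_def count_list_with_detours by simp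

lemma walk_length_with_detours:
  "W \<noteq> [] \<Longrightarrow> walk_length (with_detours W m) = walk_length W + 2 * (\<Sum>i<length W - 1. m i)"
  unfolding walk_length_def length_with_detours by (cases W) auto

definition last_visit :: "'a list \<Rightarrow> nat \<Rightarrow> bool" where
  "last_visit W j \<longleftrightarrow> 0 < j \<and> j < length W - 1 \<and> (\<forall>l. j < l \<and> l < length W \<longrightarrow> W ! l \<noteq> W ! j)"

lemma last_visit_exists:
  assumes "v \<in> set W" and "v \<noteq> hd W" and "v \<noteq> last W"
  shows "\<exists>j. last_visit W j \<and> W ! j = v"
proof -
  define S where "S = {i. i < length W \<and> W ! i = v}"
  define j where "j = Max S"
  have "finite S" "S \<noteq> {}"
    using assms(1) unfolding S_def by (auto simp: in_set_conv_nth)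
  then have "j \<in> S" and later: "\<And>l. l \<in> S \<Longrightarrow> l \<le> j"
    unfolding j_def by auto
  then have j: "j < length W" "W ! j = v"
    unfolding S_def by auto
  have "W \<noteq> []" using assms(1) by auto
  then have "j \<noteq> 0" "j \<noteq> length W - 1"
    using j assms(2,3) by (metis hd_conv_nth, metis last_conv_nth)
  with j later have "last_visit W j"
    unfolding last_visit_def S_def by fastforce
  with j show ?thesis by blast
qed

lemma card_last_visits:
  assumes "W \<noteq> []"
  shows "card {j. last_visit W j} \<le> card (set W) - 1"
proof -
  have "W ! a \<noteq> W ! b" if "last_visit W a" "last_visit W b" "a < b" for a b
    using that unfolding last_visit_def by auto
  then have "inj_on (nth W) {j. last_visit W j}"
    by (intro inj_onI) (metis mem_Collect_eq linorder_neqE_nat)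
  moreover have "nth W ` {j. last_visit W j} \<subseteq> set W - {last W}"
    using assms unfolding last_visit_def by (auto simp: last_conv_nth)
  ultimately have "card {j. last_visit W j} \<le> card (set W - {last W})"
    by (intro card_inj_on_le) auto
  with assms show ?thesis by simp
qed

lemma finite_last_visits: "finite {j. last_visit W j}"
  by (rule finite_subset[of _ "{..<length W}"]) (auto simp: last_visit_def)

lemma detour_count_upd_at_last_visit:
  assumes "last_visit W i" and "m i = 0"
  shows "detour_count W (m(i := t)) (W ! i) = detour_count W m (W ! i) + t"
    and "j < i \<Longrightarrow> last_visit W j \<Longrightarrow> detour_count W (m(i := t)) (W ! j) = detour_count W m (W ! j)"
proof -
  have "i < length W - 1" and "W ! Suc i \<noteq> W ! i"
    using assms(1) unfolding last_visit_def by auto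
  note upd = detour_count_fun_upd[of m i W, OF assms(2) this(1)]
  show "detour_count W (m(i := t)) (W ! i) = detour_count W m (W ! i) + t"
    using \<open>W ! Suc i \<noteq> W ! i\<close> unfolding upd by simp
  show "detour_count W (m(i := t)) (W ! j) = detour_count W m (W ! j)"
    if "j < i" "last_visit W j"
    using that \<open>i < length W - 1\<close> unfolding upd last_visit_def by auto
qed

lemma exists_detour_at_last_visit:
  fixes Y c :: "'a \<Rightarrow> int"
  assumes "0 < k" and "last_visit W i" and "m i = 0"
  obtains t where "t < k"
    and "(Y (W ! i) + int (detour_count W (m(i := t)) (W ! i))) mod int k = c (W ! i) mod int k"
    and "\<And>j. j < i \<Longrightarrow> last_visit W j \<Longrightarrow> detour_count W (m(i := t)) (W ! j) = detour_count W m (W ! j)"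
proof -
  define v where "v = W ! i"
  define t where "t = nat ((c v - Y v - int (detour_count W m v)) mod int k)"
  note upd = detour_count_upd_at_last_visit[where m = m and t = t, OF assms(2,3)]
  show thesis
  proof (rule that[of t])
    show "t < k"
      using assms(1) unfolding t_def by (simp add: nat_less_iff)
    show "(Y (W ! i) + int (detour_count W (m(i := t)) (W ! i))) mod int k = c (W ! i) mod int k"
      using assms(1) unfolding upd(1) unfolding t_def v_def
      by (simp add: mod_add_right_eq flip: add.assoc)
  qed (rule upd(2))
qed

lemma exists_detours_mod:
  fixes Y c :: "'a \<Rightarrow> int"
  assumes "0 < k"
  shows "\<exists>m. (\<forall>j. m j < k) \<and> (\<forall>j. m j \<noteq> 0 \<longrightarrow> last_visit W j \<and> j < i) \<and>
     (\<forall>j<i. last_visit W j \<longrightarrow> (Y (W ! j) + int (detour_count W m (W ! j))) mod int k = c (W ! j) mod int k)"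
proof (induction i)
  case 0
  show ?case using assms by (intro exI[of _ "\<lambda>_. 0"]) simp
next
  case (Suc i)
  then obtain m where bound: "\<forall>j. m j < k" and supp: "\<forall>j. m j \<noteq> 0 \<longrightarrow> last_visit W j \<and> j < i"
    and congr: "\<forall>j<i. last_visit W j \<longrightarrow>
                  (Y (W ! j) + int (detour_count W m (W ! j))) mod int k = c (W ! j) mod int k"
    by blast
  show ?case
  proof (cases "last_visit W i")
    case False
    then show ?thesis
      using bound supp congr by (intro exI[of _ m]) (auto simp: less_Suc_eq)
  next
    case True
    have "m i = 0" using supp by blast
    then obtain t where "t < k"
      and new: "(Y (W ! i) + int (detour_count W (m(i := t)) (W ! i))) mod int k = c (W ! i) mod int k"
      and old: "\<And>j. j < i \<Longrightarrow> last_visit W j \<Longrightarrow> detour_count W (m(i := t)) (W ! j) = detour_count W m (W ! j)"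
      using exists_detour_at_last_visit[where Y = Y and c = c, OF assms True] by blast
    show ?thesis
    proof (intro exI[of _ "m(i := t)"] conjI allI impI)
      show "(m(i := t)) j < k" for j
        using bound \<open>t < k\<close> by simp
      fix j
      assume "(m(i := t)) j \<noteq> 0"
      then have "j = i \<or> m j \<noteq> 0" by (metis fun_upd_other)
      then show "last_visit W j" and "j < Suc i"
        using supp True by (blast intro: less_SucI)+
    next
      fix j
      assume "j < Suc i" and "last_visit W j"
      then show "(Y (W ! j) + int (detour_count W (m(i := t)) (W ! j))) mod int k = c (W ! j) mod int k"
        using new old[of j] congr by (cases "j = i") (simp_all add: less_Suc_eq)
    qed
  qed
qed

lemma walk_length_with_detours_le:
  assumes "W \<noteq> []" and "\<And>j. m j < k" and "\<And>j. m j \<noteq> 0 \<Longrightarrow> last_visit W j"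
  shows "walk_length (with_detours W m) \<le> walk_length W + (card (set W) - 1) * (2 * k - 2)"
proof -
  have "(\<Sum>i<length W - 1. m i) \<le> (k - 1) * card {j. last_visit W j}"
  proof (rule sum_le_mult_card_support[OF finite_last_visits])
    show "m j \<le> k - 1" for j
      using assms(2)[of j] by linarith
  qed (use assms(3) in blast)
  also have "\<dots> \<le> (k - 1) * (card (set W) - 1)"
    using card_last_visits[OF assms(1)] by simp
  finally have "(\<Sum>i<length W - 1. m i) \<le> (k - 1) * (card (set W) - 1)" .
  moreover have "(card (set W) - 1) * (2 * k - 2) = 2 * ((k - 1) * (card (set W) - 1))"
    by (cases k) simp_all
  ultimately show ?thesis
    using walk_length_with_detours[OF assms(1), of m] by linarith
qed

fun alternating :: "'a \<Rightarrow> 'a \<Rightarrow> nat \<Rightarrow> 'a list" where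
  "alternating a b 0 = []"
| "alternating a b (Suc n) = a # alternating b a n"

lemma length_alternating [simp]: "length (alternating a b n) = n"
  by (induction n arbitrary: a b) auto

lemma set_alternating: "set (alternating a b n) \<subseteq> {a, b}"
  by (induction n arbitrary: a b) auto

lemma hd_alternating: "0 < n \<Longrightarrow> hd (alternating a b n) = a"
  by (cases n) auto

lemma alternating_eq_Nil_iff [simp]: "alternating a b n = [] \<longleftrightarrow> n = 0"
  by (cases n) auto

lemma last_alternating: "0 < n \<Longrightarrow> last (alternating a b n) = (if odd n then a else b)"
proof (induction n arbitrary: a b)
  case (Suc n)
  then show ?case by (cases n) auto
qed simp

lemma count_list_alternating:
  "a \<noteq> b \<Longrightarrow> count_list (alternating a b n) v
     = (if v = a then (n + 1) div 2 else if v = b then n div 2 else 0)"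
  by (induction n arbitrary: a b) auto

lemma successively_alternating:
  "P a b \<Longrightarrow> P b a \<Longrightarrow> successively P (alternating a b n)"
proof (induction n arbitrary: a b)
  case (Suc n)
  then show ?case by (cases n) auto
qed simp

lemma walk_degree_append_alternating:
  assumes "W \<noteq> []" and "hd W = r" and "last W = r" and "w \<noteq> r"
  shows "walk_degree V E (W @ alternating w r L) v
           = walk_degree V E W v + int L * (of_bool (v = r) + of_bool (v = w))"
proof (cases "L = 0")
  case False
  then have "hd (W @ alternating w r L) = r"
    and "last (W @ alternating w r L) = (if odd L then w else r)"
    using assms last_alternating[of L w r] by auto
  with assms show ?thesis
    unfolding walk_degree_def count_list_append count_list_alternating[OF assms(4)]
    by (cases "even L") (auto elim: evenE oddE)
qed simp

definition colour_coded :: "'a set \<Rightarrow> nat \<Rightarrow> ('a \<Rightarrow> nat) \<Rightarrow> 'a \<Rightarrow> ('a \<Rightarrow> int) \<Rightarrow> bool" where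
  "colour_coded V k c r f \<longleftrightarrow> (\<forall>v\<in>V - {r}. f v div 2 mod int k = int (c v))"

locale sgraph =
  fixes V :: "'a set" and E :: "'a \<Rightarrow> 'a \<Rightarrow> bool"
  assumes simple: "simple_graph V E"
begin

lemma finite_vertices: "finite V"
  and edge_vertices: "E u v \<Longrightarrow> u \<in> V \<and> v \<in> V"
  and edge_sym: "E u v \<Longrightarrow> E v u"
  and no_loop: "\<not> E v v"
  using simple unfolding simple_graph_def by blast+

lemma finite_neighbours: "finite (neighbours V E v)"
  using finite_vertices unfolding neighbours_def by simp

lemma card_neighbours_on_edge:
  assumes "E x y"
  shows "card (neighbours V E v \<inter> {u. {x, y} = {v, u}}) = of_bool (x = v) + of_bool (y = v)"
proof -
  have "x \<noteq> y" "x \<in> V" "y \<in> V" "E y x"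
    using assms no_loop edge_vertices edge_sym by blast+
  then have "neighbours V E v \<inter> {u. {x, y} = {v, u}}
               = (if x = v then {y} else if y = v then {x} else {})"
    using assms unfolding neighbours_def doubleton_eq_iff by auto
  with \<open>x \<noteq> y\<close> show ?thesis by auto
qed

lemma sum_traversals:
  "successively E W \<Longrightarrow> W \<noteq> [] \<Longrightarrow>
    int (\<Sum>u\<in>neighbours V E v. traversals W v u)
      = 2 * int (count_list W v) - of_bool (hd W = v) - of_bool (last W = v)"
proof (induction W rule: induct_list012)
  case (3 x y W)
  have "(\<Sum>u\<in>neighbours V E v. traversals (x # y # W) v u)
          = of_bool (x = v) + of_bool (y = v) + (\<Sum>u\<in>neighbours V E v. traversals (y # W) v u)"
    using card_neighbours_on_edge[of x y v] 3(3)
    by (simp add: traversals_Cons_Cons sum.distrib finite_neighbours)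
  moreover have "int (\<Sum>u\<in>neighbours V E v. traversals (y # W) v u)
      = 2 * int (count_list (y # W) v) - of_bool (y = v) - of_bool (last (y # W) = v)"
    using 3 by simp
  ultimately show ?case
    by (cases "x = v"; cases "y = v") simp_all
qed simp_all

lemma degree_plus_eq_walk_degree:
  assumes "walk V E W"
  shows "int (degree_plus V E W v) = walk_degree V E W v"
proof -
  have "degree_plus V E W v = degree V E v + (\<Sum>u\<in>neighbours V E v. traversals W v u)"
    unfolding degree_plus_def card_neighbours[symmetric] neighbours_def
    by (simp only: sum.distrib) simp
  then show ?thesis
    using sum_traversals[of W v] assms unfolding walk_iff_successively walk_degree_def by simp
qed

lemma irregularisingI:
  assumes "walk V E W" and "\<And>a b. E a b \<Longrightarrow> walk_degree V E W a \<noteq> walk_degree V E W b"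
  shows "irregularising V E W"
  using assms degree_plus_eq_walk_degree unfolding irregularising_def by metis

lemma colour_coded_adjacent_distinct:
  assumes "proper_colouring V E k c" and "colour_coded V k c r f"
    and "E a b" and "a \<noteq> r" and "b \<noteq> r"
  shows "f a \<noteq> f b"
proof -
  have "c a \<noteq> c b" using assms(1,3) unfolding proper_colouring_def by blast
  with assms(2-5) edge_vertices show ?thesis
    unfolding colour_coded_def by (metis Diff_iff of_nat_eq_iff singletonD)
qed

lemma irregularising_if_colour_coded:
  assumes "proper_colouring V E k c" and "walk V E W"
    and "colour_coded V k c r (walk_degree V E W)"
    and "\<And>u. E r u \<Longrightarrow> walk_degree V E W u \<noteq> walk_degree V E W r"
  shows "irregularising V E W"
proof (rule irregularisingI[OF assms(2)])
  fix a b
  assume "E a b"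
  then show "walk_degree V E W a \<noteq> walk_degree V E W b"
    using assms colour_coded_adjacent_distinct edge_sym by metis
qed

lemma walk_Cons_append_singleton:
  assumes "walk V E W" and "E x (hd W)" and "E (last W) y"
  shows "walk V E (x # W @ [y])"
proof -
  have "successively E (W @ [y])"
    using assms(1,3) unfolding walk_iff_successively by (subst successively_append_iff) simp
  then show ?thesis
    using assms edge_vertices unfolding walk_iff_successively by (cases W) auto
qed

lemma walk_append_alternating:
  assumes "walk V E W" and "last W = r" and "E r w"
  shows "walk V E (W @ alternating w r L)"
proof -
  have "successively E (W @ alternating w r L)"
  proof (cases "L = 0")
    case False
    then have "hd (alternating w r L) = w" by (simp add: hd_alternating)
    moreover have "successively E (alternating w r L)"
      using assms(3) edge_sym by (blast intro: successively_alternating)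
    ultimately show ?thesis
      using assms False unfolding walk_iff_successively by (simp add: successively_append_iff)
  qed (use assms(1) in \<open>simp add: walk_iff_successively\<close>)
  moreover have "set (W @ alternating w r L) \<subseteq> V"
    using assms set_alternating[of w r L] edge_vertices[OF assms(3)]
    unfolding walk_iff_successively by auto
  ultimately show ?thesis
    using assms(1) unfolding walk_iff_successively by simp
qed

lemma exists_shift_avoiding_neighbours:
  fixes f :: "'a \<Rightarrow> int"
  assumes "E r w"
  shows "\<exists>L\<le>degree V E r + degree V E w - 2.
    (\<forall>u\<in>neighbours V E r - {w}. f u \<noteq> f r + int L) \<and> (\<forall>u\<in>neighbours V E w - {r}. f u \<noteq> f w + int L)"
proof -
  have w: "w \<in> neighbours V E r" "r \<in> neighbours V E w"
    using assms edge_vertices edge_sym unfolding neighbours_def by auto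
  define Bad where "Bad = (\<lambda>u. f u - f r) ` (neighbours V E r - {w})
                        \<union> (\<lambda>u. f u - f w) ` (neighbours V E w - {r})"
  have "card Bad \<le> card (neighbours V E r - {w}) + card (neighbours V E w - {r})"
    unfolding Bad_def
    by (rule card_Un_le[THEN order_trans], intro add_mono card_image_le) (simp_all add: finite_neighbours)
  also have "\<dots> = degree V E r + degree V E w - 2"
  proof -
    have "card (neighbours V E r) > 0" "card (neighbours V E w) > 0"
      using w finite_neighbours card_gt_0_iff by blast+
    then show ?thesis
      using w by (simp add: card_Diff_singleton finite_neighbours card_neighbours)
  qed
  finally have "card Bad \<le> degree V E r + degree V E w - 2" .
  moreover have "finite Bad"
    unfolding Bad_def by (simp add: finite_neighbours)
  ultimately obtain L where "L \<le> degree V E r + degree V E w - 2" "int L \<notin> Bad"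
    using exists_nat_le_not_in[of Bad] by auto
  then show ?thesis
    unfolding Bad_def by (intro exI[of _ L]) force
qed

lemma degree_le_max_degree: "v \<in> V \<Longrightarrow> degree V E v \<le> max_degree V E"
  unfolding max_degree_def using finite_vertices by simp

lemma exists_colour_avoiding_neighbours:
  assumes "degree V E a \<le> D"
  shows "\<exists>col\<le>D. \<forall>v. E a v \<longrightarrow> col \<noteq> c v"
proof -
  let ?used = "c ` neighbours V E a"
  have "card ?used \<le> D"
    using card_image_le[OF finite_neighbours] assms unfolding card_neighbours by (rule le_trans)
  then have "\<not> {0..D} \<subseteq> ?used"
    using card_mono[OF finite_imageI[OF finite_neighbours], of "{0..D}"] by fastforce
  then obtain col where "col \<le> D" "col \<notin> ?used"
    by (meson atLeastAtMost_iff subsetI zero_le)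
  moreover have "v \<in> neighbours V E a" if "E a v" for v
    using that edge_vertices unfolding neighbours_def by blast
  ultimately show ?thesis by blast
qed

lemma exists_proper_colouring:
  assumes D: "\<And>v. v \<in> V \<Longrightarrow> degree V E v \<le> D"
  shows "\<exists>c. proper_colouring V E (D + 1) c"
proof -
  have "\<exists>c. \<forall>u\<in>S. c u \<le> D \<and> (\<forall>v\<in>S. E u v \<longrightarrow> c u \<noteq> c v)" if "S \<subseteq> V" for S
    using finite_subset[OF that finite_vertices] that
  proof (induction S rule: finite_induct)
    case (insert a S)
    then obtain c where c: "\<forall>u\<in>S. c u \<le> D \<and> (\<forall>v\<in>S. E u v \<longrightarrow> c u \<noteq> c v)"
      by blast
    obtain col where col: "col \<le> D" "\<And>v. E a v \<Longrightarrow> col \<noteq> c v"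
      using exists_colour_avoiding_neighbours[of a D c] D insert.prems by auto
    have "(c(a := col)) u \<noteq> (c(a := col)) v"
      if uv: "u \<in> insert a S" "v \<in> insert a S" "E u v" for u v
    proof -
      consider "u = a" | "v = a" | "u \<in> S" "v \<in> S" "u \<noteq> a" "v \<noteq> a"
        using uv insert.hyps(2) by blast
      then show ?thesis
      proof cases
        case 1
        then have "E a v" "v \<noteq> a" using uv(3) no_loop by auto
        with 1 col(2) show ?thesis by simp
      next
        case 2
        then have "E a u" "u \<noteq> a" using edge_sym[OF uv(3)] no_loop by auto
        with 2 col(2) show ?thesis by (simp add: eq_commute)
      next
        case 3
        with uv(3) c show ?thesis by simp
      qed
    qed
    with c col(1) show ?case
      by (intro exI[of _ "c(a := col)"]) auto
  qed simp
  then obtain c where c: "\<forall>u\<in>V. c u \<le> D \<and> (\<forall>v\<in>V. E u v \<longrightarrow> c u \<noteq> c v)"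
    by blast
  have "c u \<noteq> c v" if "E u v" for u v
    using c edge_vertices[OF that] that by blast
  moreover have "c v < D + 1" if "v \<in> V" for v
    using c that by fastforce
  ultimately have "proper_colouring V E (D + 1) c"
    unfolding proper_colouring_def by blast
  then show ?thesis by blast
qed

lemma exists_proper_colouring_max_degree: "\<exists>c. proper_colouring V E (max_degree V E + 1) c"
  by (rule exists_proper_colouring) (rule degree_le_max_degree)

lemma chromatic_number_le_Suc_max_degree: "chromatic_number V E \<le> max_degree V E + 1"
  unfolding chromatic_number_def using exists_proper_colouring_max_degree by (rule Least_le)

lemma proper_colouring_chromatic_number: "\<exists>c. proper_colouring V E (chromatic_number V E) c"
  unfolding chromatic_number_def using exists_proper_colouring_max_degree by (rule LeastI)

lemma walk_eq_Cons_Cons: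
  assumes "walk V E W" and "set W = V" and "E (hd W) u"
  obtains w1 W' where "W = hd W # w1 # W'" and "E (hd W) w1"
proof -
  have "u \<in> set W" "u \<noteq> hd W"
    using assms(2,3) edge_vertices no_loop by blast+
  obtain x W0 where "W = x # W0"
    using assms(1) unfolding walk_iff_successively by (cases W) auto
  with \<open>u \<in> set W\<close> \<open>u \<noteq> hd W\<close> obtain w1 W' where "W = hd W # w1 # W'"
    by (cases W0) auto
  moreover from this have "E (hd W) w1"
    using assms(1) unfolding walk_iff_successively by (metis successively.simps(3))
  ultimately show thesis by (rule that)
qed

lemma exists_other_neighbour:
  assumes "2 \<le> degree V E r"
  shows "\<exists>w. E r w \<and> w \<noteq> x"
proof (rule ccontr)
  assume "\<not> ?thesis"
  then have "neighbours V E r \<subseteq> {x}"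
    unfolding neighbours_def by blast
  then have "card (neighbours V E r) \<le> card {x}"
    by (rule card_mono[rotated]) simp
  with assms show False
    unfolding card_neighbours by simp
qed

lemma is_K2_if_adjacent_leaves:
  assumes "connected_graph V E" and "E a b"
    and "degree V E a = 1" and "degree V E b = 1"
  shows "is_K2 V E"
proof -
  have "a \<in> neighbours V E b" "b \<in> neighbours V E a"
    using assms(2) edge_vertices edge_sym unfolding neighbours_def by auto
  then have N: "neighbours V E a = {b}" "neighbours V E b = {a}"
    using assms(3,4) finite_neighbours card_neighbours by (metis card_1_singletonE singletonD)+
  have "v \<in> {a, b}" if "E\<^sup>*\<^sup>* a v" for v
    using that
  proof (induction rule: rtranclp_induct)
    case (step y z)
    then have "z \<in> neighbours V E y"
      using edge_vertices unfolding neighbours_def by auto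
    with step.IH N show ?case by auto
  qed simp
  then have "V = {a, b}"
    using assms(1,2) edge_vertices unfolding connected_graph_def by blast
  with assms(2) no_loop show ?thesis
    unfolding is_K2_def by metis
qed

lemma exists_closed_walk_not_from_leaf:
  assumes "nice V E" and "closed_walk V E W" and "set W = V"
  obtains W' where "closed_walk V E W'" "set W' = V" "walk_length W' = walk_length W"
    "degree V E (hd W') \<noteq> 1"
proof (cases "degree V E (hd W) = 1")
  case False
  then show thesis by (rule that[OF assms(2,3) refl])
next
  case True
  define r where "r = hd W"
  have walk: "walk V E W" and "last W = r"
    using assms(2) unfolding closed_walk_def r_def by auto
  have "neighbours V E r \<noteq> {}"
    using True card_neighbours unfolding r_def by (metis card.empty zero_neq_one)
  then obtain u where "E r u" unfolding neighbours_def by blast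
  then obtain w1 W1 where Wr: "W = r # w1 # W1" and rw1: "E r w1"
    using walk_eq_Cons_Cons[OF walk assms(3)] unfolding r_def by metis
  let ?W' = "w1 # W1 @ [w1]"
  have "walk V E (w1 # W1)" "last (w1 # W1) = r"
    using walk \<open>last W = r\<close> unfolding Wr walk_iff_successively by auto
  moreover from this have "successively E ((w1 # W1) @ [w1])"
    using rw1 unfolding walk_iff_successively by (subst successively_append_iff) simp
  ultimately have "walk V E ?W'"
    unfolding walk_iff_successively by simp
  moreover have "r \<in> set (w1 # W1)"
    using \<open>last (w1 # W1) = r\<close> by (metis last_in_set list.distinct(1))
  then have "set ?W' = V"
    using assms(3) unfolding Wr by auto
  moreover have "degree V E w1 \<noteq> 1"
    using is_K2_if_adjacent_leaves[OF _ rw1] True assms(1) unfolding nice_def r_def by blast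
  ultimately show thesis
    by (intro that[of ?W']) (auto simp: closed_walk_def walk_length_def Wr)
qed

lemma exists_colour_coded_walk:
  assumes "closed_walk V E W" and "set W = V" and "proper_colouring V E k c"
  obtains W' where "walk V E W'" "hd W' = hd W" "last W' = hd W" "set W' = V"
    "colour_coded V k c (hd W) (walk_degree V E W')"
    "walk_length W' \<le> walk_length W + (card V - 1) * (2 * k - 2)"
proof -
  have W: "W \<noteq> []" "successively E W" "last W = hd W"
    using assms(1) unfolding closed_walk_def walk_iff_successively by auto
  then have "0 < k"
    using assms(2,3) unfolding proper_colouring_def by (metis hd_in_set not_less0 zero_less_iff_neq_zero)
  then obtain m where bound: "\<forall>j. m j < k" and supp: "\<forall>j. m j \<noteq> 0 \<longrightarrow> last_visit W j \<and> j < length W"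
    and congr: "\<forall>j<length W. last_visit W j \<longrightarrow>
       (walk_degree V E W (W ! j) div 2 + int (detour_count W m (W ! j))) mod int k = int (c (W ! j)) mod int k"
    using exists_detours_mod[where i = "length W" and Y = "\<lambda>v. walk_degree V E W v div 2"
        and c = "\<lambda>v. int (c v)"] by blast
  let ?W' = "with_detours W m"
  show thesis
  proof
    show "walk V E ?W'"
      using W assms(2) successively_with_detours[OF edge_sym] unfolding walk_iff_successively by simp
    show "hd ?W' = hd W" "last ?W' = hd W" "set ?W' = V"
      using W assms(2) by simp_all
    show "colour_coded V k c (hd W) (walk_degree V E ?W')"
      unfolding colour_coded_def
    proof
      fix v
      assume v: "v \<in> V - {hd W}"
      then obtain j where "last_visit W j" "W ! j = v"
        using last_visit_exists[of v W] W assms(2) by auto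
      moreover have "c v < k" using v assms(3) unfolding proper_colouring_def by blast
      ultimately have "(walk_degree V E W v div 2 + int (detour_count W m v)) mod int k = int (c v)"
        using congr by (auto simp: last_visit_def)
      then show "walk_degree V E ?W' v div 2 mod int k = int (c v)"
        using W(1) by (simp add: walk_degree_with_detours add.commute)
    qed
    show "walk_length ?W' \<le> walk_length W + (card V - 1) * (2 * k - 2)"
      using walk_length_with_detours_le[OF W(1)] bound supp assms(2) by blast
  qed
qed

end

locale coded_walk = sgraph +
  fixes k :: nat and c :: "'a \<Rightarrow> nat" and Wc :: "'a list" and r :: 'a
  assumes colouring: "proper_colouring V E k c"
    and walk: "walk V E Wc" and hd_walk: "hd Wc = r" and last_walk: "last Wc = r"
    and coded: "colour_coded V k c r (walk_degree V E Wc)"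
begin

abbreviation wdeg :: "'a \<Rightarrow> int" where
  "wdeg \<equiv> walk_degree V E Wc"

lemma walk_nonempty: "Wc \<noteq> []"
  and successively_walk: "successively E Wc"
  using walk unfolding walk_iff_successively by auto

lemma shifted_pair_separates:
  assumes rw: "E r w" and differ: "wdeg w \<noteq> wdeg r"
    and avoid_r: "\<forall>u\<in>neighbours V E r - {w}. wdeg u \<noteq> wdeg r + int L"
    and avoid_w: "\<forall>u\<in>neighbours V E w - {r}. wdeg u \<noteq> wdeg w + int L"
    and ab: "E a b"
  defines "g \<equiv> \<lambda>v. wdeg v + int L * (of_bool (v = r) + of_bool (v = w))"
  shows "g a \<noteq> g b"
proof -
  have "w \<noteq> r" using rw no_loop by blast
  have at_pair: "g x \<noteq> g y" if xy: "E x y" and x: "x = r \<or> x = w" for x y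
  proof -
    have "y \<noteq> x" "y \<in> V" using xy no_loop edge_vertices by blast+
    then consider "{x, y} = {r, w}" | "x = r" "y \<in> neighbours V E r - {w}"
      | "x = w" "y \<in> neighbours V E w - {r}"
      using x xy unfolding neighbours_def by auto
    then show ?thesis
    proof cases
      case 1
      then have "x = r \<and> y = w \<or> x = w \<and> y = r" by (simp add: doubleton_eq_iff)
      then show ?thesis using differ \<open>w \<noteq> r\<close> unfolding g_def by auto
    next
      case 2
      then show ?thesis using avoid_r \<open>y \<noteq> x\<close> \<open>w \<noteq> r\<close> unfolding g_def by auto
    next
      case 3
      then show ?thesis using avoid_w \<open>y \<noteq> x\<close> \<open>w \<noteq> r\<close> unfolding g_def by auto
    qed
  qed
  consider "a = r \<or> a = w" | "b = r \<or> b = w" | "a \<notin> {r, w}" "b \<notin> {r, w}" by blast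
  then show ?thesis
  proof cases
    case 1
    then show ?thesis by (rule at_pair[OF ab])
  next
    case 2
    then show ?thesis by (rule at_pair[OF edge_sym[OF ab], THEN not_sym])
  next
    case 3
    then show ?thesis
      using colour_coded_adjacent_distinct[OF colouring coded ab] unfolding g_def by simp
  qed
qed

lemma repair_at_neighbour:
  assumes rw: "E r w" and differ: "wdeg w \<noteq> wdeg r"
  shows "\<exists>L\<le>degree V E r + degree V E w - 2. irregularising V E (Wc @ alternating w r L)"
proof -
  have "w \<noteq> r" using rw no_loop by blast
  obtain L where "L \<le> degree V E r + degree V E w - 2"
    and avoid: "\<forall>u\<in>neighbours V E r - {w}. wdeg u \<noteq> wdeg r + int L"
      "\<forall>u\<in>neighbours V E w - {r}. wdeg u \<noteq> wdeg w + int L"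
    using exists_shift_avoiding_neighbours[OF rw] by blast
  moreover have "irregularising V E (Wc @ alternating w r L)"
  proof (rule irregularisingI[OF walk_append_alternating[OF walk last_walk rw]])
    fix a b
    assume "E a b"
    then show "walk_degree V E (Wc @ alternating w r L) a \<noteq> walk_degree V E (Wc @ alternating w r L) b"
      using shifted_pair_separates[OF rw differ avoid]
      by (simp add: walk_degree_append_alternating[OF walk_nonempty hd_walk last_walk \<open>w \<noteq> r\<close>])
  qed
  ultimately show ?thesis by blast
qed

lemma colour_coded_transfer:
  assumes "\<And>v. v \<in> V \<Longrightarrow> v \<noteq> r \<Longrightarrow> f v div 2 mod int k = wdeg v div 2 mod int k"
  shows "colour_coded V k c r f"
  using assms coded unfolding colour_coded_def by simp

end

locale uniform_root = coded_walk +
  fixes w1 W w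
  assumes Wc: "Wc = r # w1 # W" and rw: "E r w" and w_ne_w1: "w \<noteq> w1"
    and same: "\<And>u. E r u \<Longrightarrow> wdeg u = wdeg r"
begin

lemma rw1: "E r w1"
  using successively_walk Wc by simp

lemma w_ne_r: "w \<noteq> r" and w1_ne_r: "w1 \<noteq> r"
  using rw rw1 no_loop by blast+

lemma two_le_k: "2 \<le> k"
proof -
  have "c r \<noteq> c w1" "c r < k" "c w1 < k"
    using colouring rw1 edge_vertices[OF rw1] unfolding proper_colouring_def by auto
  then show ?thesis by linarith
qed

lemma repair_even:
  assumes "even (wdeg r)"
  shows "irregularising V E (w1 # Wc @ [w])"
proof -
  let ?W' = "w1 # Wc @ [w]"
  have deg': "walk_degree V E ?W' v
      = wdeg v + 2 * of_bool (v = r) + of_bool (v = w1) + of_bool (v = w)" for v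
    using hd_walk last_walk w_ne_r w1_ne_r unfolding walk_degree_def by auto
  have walk': "walk V E ?W'"
    using walk_Cons_append_singleton[OF walk] edge_sym[OF rw1] rw hd_walk last_walk by simp
  have "colour_coded V k c r (walk_degree V E ?W')"
  proof (rule colour_coded_transfer)
    fix v
    assume "v \<in> V" "v \<noteq> r"
    show "walk_degree V E ?W' v div 2 mod int k = wdeg v div 2 mod int k"
    proof (cases "v = w1 \<or> v = w")
      case True
      then have "wdeg v = wdeg r" "walk_degree V E ?W' v = wdeg r + 1"
        using same rw rw1 deg'[of v] \<open>v \<noteq> r\<close> w_ne_w1 by auto
      with assms show ?thesis by (auto elim: evenE)
    next
      case False
      then show ?thesis using deg'[of v] \<open>v \<noteq> r\<close> by simp
    qed
  qed
  moreover have "walk_degree V E ?W' u \<noteq> walk_degree V E ?W' r" if "E r u" for u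
    using that same[OF that] deg'[of u] deg'[of r] no_loop w_ne_r w1_ne_r w_ne_w1
    by (cases "u = w1"; cases "u = w") auto
  ultimately show ?thesis
    using irregularising_if_colour_coded[OF colouring walk'] by blast
qed

lemma repair_odd:
  assumes "odd (wdeg r)"
  shows "irregularising V E ((w1 # W) @ alternating w r (2 * k - 1))"
proof -
  let ?W' = "(w1 # W) @ alternating w r (2 * k - 1)"
  have A: "0 < 2 * k - 1" "odd (2 * k - 1)" "(2 * k - 1 + 1) div 2 = k" "(2 * k - 1) div 2 = k - 1"
    using two_le_k by presburger+
  have "hd ?W' = w1" "last ?W' = w"
    using A(1,2) last_alternating[of "2 * k - 1" w r] by auto
  moreover have "count_list ?W' v = count_list Wc v - of_bool (v = r)
      + (if v = w then k else if v = r then k - 1 else 0)" for v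
    using Wc A(3,4) w_ne_r by (simp add: count_list_alternating)
  ultimately have deg': "walk_degree V E ?W' v = wdeg v + (2 * int k - 2) * of_bool (v = r)
      - of_bool (v = w1) + (2 * int k - 1) * of_bool (v = w)" for v
    using hd_walk last_walk w_ne_r w1_ne_r w_ne_w1 two_le_k Wc
    unfolding walk_degree_def by (auto simp: of_nat_diff)
  have "walk V E (w1 # W)" "last (w1 # W) = r"
    using walk last_walk Wc unfolding walk_iff_successively by auto
  then have walk': "walk V E ?W'"
    using rw by (rule walk_append_alternating)
  have "colour_coded V k c r (walk_degree V E ?W')"
  proof (rule colour_coded_transfer)
    fix v
    assume "v \<in> V" "v \<noteq> r"
    consider "v = w1" | "v = w" | "v \<noteq> w1" "v \<noteq> w" by blast
    then show "walk_degree V E ?W' v div 2 mod int k = wdeg v div 2 mod int k"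
    proof cases
      case 1
      then have "wdeg v = wdeg r" "walk_degree V E ?W' v = wdeg r - 1"
        using same rw1 deg'[of v] w_ne_w1 \<open>v \<noteq> r\<close> by auto
      with assms show ?thesis by (auto elim: oddE)
    next
      case 2
      then have "wdeg v = wdeg r" "walk_degree V E ?W' v = wdeg r + (2 * int k - 1)"
        using same rw deg'[of v] w_ne_w1 \<open>v \<noteq> r\<close> by auto
      with assms show ?thesis by (auto elim: oddE)
    next
      case 3
      then show ?thesis using deg'[of v] \<open>v \<noteq> r\<close> by simp
    qed
  qed
  moreover have "walk_degree V E ?W' u \<noteq> walk_degree V E ?W' r" if "E r u" for u
    using that same[OF that] deg'[of u] deg'[of r] no_loop w_ne_r w1_ne_r w_ne_w1 two_le_k
    by (cases "u = w1"; cases "u = w") auto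
  ultimately show ?thesis
    using irregularising_if_colour_coded[OF colouring walk'] by blast
qed

lemma exists_repaired_walk:
  assumes "1 \<le> D" and "k \<le> D + 1"
  obtains W' where "irregularising V E W'" "walk_length W' \<le> walk_length Wc + 2 * D"
proof (cases "even (wdeg r)")
  case True
  then show thesis
    using that[OF repair_even] assms(1) by (simp add: walk_length_def Wc)
next
  case False
  then show thesis
    using that[OF repair_odd] assms(2) two_le_k by (simp add: walk_length_def Wc)
qed

end

context coded_walk
begin

lemma exists_irregularising_extension:
  assumes "set Wc = V" and "degree V E r \<noteq> 1"
    and "k \<le> D + 1" and D: "\<And>v. v \<in> V \<Longrightarrow> degree V E v \<le> D"
  obtains W' where "irregularising V E W'" "walk_length W' \<le> walk_length Wc + 2 * D"
proof -
  consider (distinct) "\<And>u. E r u \<Longrightarrow> wdeg u \<noteq> wdeg r"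
    | (neighbour) w where "E r w" "wdeg w \<noteq> wdeg r"
    | (uniform) u where "E r u" "\<And>u. E r u \<Longrightarrow> wdeg u = wdeg r"
    by blast
  then show thesis
  proof cases
    case distinct
    then show thesis
      using that irregularising_if_colour_coded[OF colouring walk coded] by simp
  next
    case (neighbour w)
    then obtain L where "L \<le> degree V E r + degree V E w - 2"
      and "irregularising V E (Wc @ alternating w r L)"
      using repair_at_neighbour by blast
    moreover have "degree V E r \<le> D" "degree V E w \<le> D"
      using D edge_vertices[OF neighbour(1)] by auto
    ultimately show thesis
      using that walk_nonempty by (simp add: walk_length_append)
  next
    case (uniform u)
    obtain w1 W where Wc: "Wc = r # w1 # W"
      using walk_eq_Cons_Cons[OF walk assms(1)] uniform(1) hd_walk by metis
    have "r \<in> V" using edge_vertices uniform(1) by blast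
    then have "degree V E r \<le> D" using D by blast
    have "degree V E r \<noteq> 0"
      using uniform(1) edge_vertices finite_neighbours card_neighbours unfolding neighbours_def
      by (metis (mono_tags) card_0_eq empty_iff mem_Collect_eq)
    with assms(2) have "2 \<le> degree V E r" by linarith
    then obtain w where "E r w" "w \<noteq> w1"
      using exists_other_neighbour by blast
    have root: "uniform_root V E k c Wc r w1 W w"
      using Wc \<open>E r w\<close> \<open>w \<noteq> w1\<close> uniform(2) by unfold_locales
    show thesis
      using uniform_root.exists_repaired_walk[OF root _ assms(3)] that \<open>2 \<le> degree V E r\<close>
        \<open>degree V E r \<le> D\<close> by fastforce
  qed
qed

end

context sgraph
begin

lemma exists_irregularising_walk:
  assumes "closed_walk V E W" and "set W = V" and "degree V E (hd W) \<noteq> 1"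
  obtains W' where "irregularising V E W'"
    "walk_length W' \<le> walk_length W + (card V - 1) * (2 * chromatic_number V E - 2) + 2 * max_degree V E"
proof -
  obtain c where c: "proper_colouring V E (chromatic_number V E) c"
    using proper_colouring_chromatic_number by blast
  obtain Wc where "walk V E Wc" "hd Wc = hd W" "last Wc = hd W" "set Wc = V"
      "colour_coded V (chromatic_number V E) c (hd W) (walk_degree V E Wc)"
    and len: "walk_length Wc \<le> walk_length W + (card V - 1) * (2 * chromatic_number V E - 2)"
    using exists_colour_coded_walk[OF assms(1,2) c] by blast
  then interpret coded_walk V E "chromatic_number V E" c Wc "hd W"
    using c by unfold_locales
  obtain W' where "irregularising V E W'" "walk_length W' \<le> walk_length Wc + 2 * max_degree V E"
    using exists_irregularising_extension[OF \<open>set Wc = V\<close> assms(3)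
        chromatic_number_le_Suc_max_degree degree_le_max_degree] by blast
  with len show thesis
    using that by (meson add_le_mono1 order_trans)
qed

end

theorem theorem4p5:
  fixes V :: "'a set" and E :: "'a \<Rightarrow> 'a \<Rightarrow> bool" and W :: "'a list"
  assumes "simple_graph V E"
    and "nice V E"
    and "connected_graph V E"
    and "closed_walk V E W"
    and "set W = V"
  shows "min_irreg_walk_length V E \<le> walk_length W + (card V - 1) * (2 * chromatic_number V E - 2)
                     + 2 * max_degree V E"
proof -
  interpret sgraph V E by (rule sgraph.intro) (rule assms(1))
  obtain W0 where "closed_walk V E W0" "set W0 = V" "degree V E (hd W0) \<noteq> 1"
    and "walk_length W0 = walk_length W"
    using exists_closed_walk_not_from_leaf[OF assms(2,4,5)] by blast
  then obtain W' where "irregularising V E W'" and len: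
    "walk_length W' \<le> walk_length W + (card V - 1) * (2 * chromatic_number V E - 2) + 2 * max_degree V E"
    using exists_irregularising_walk by metis
  have "min_irreg_walk_length V E \<le> walk_length W'"
    unfolding min_irreg_walk_length_def using \<open>irregularising V E W'\<close> by (blast intro: Least_le)
  with len show ?thesis by linarith
qed

end
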